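(* Let $r, s \ge 5$ be integers. Then the graph $P_r \,\square\, P_s$ has a unique $\mathrm{gp_e}$-set, i.e., there is exactly one edge general position set of $P_r \,\square\, P_s$ of cardinality $\mathrm{gp_e}(P_r \,\square\, P_s)$.
   Context: $P_n$ denotes the path on $n$ vertices. The Cartesian product $G \,\square\, H$ has vertex set $V(G)\times V(H)$, with $(g,h)$ adjacent to $(g',h')$ iff either $gg' \in E(G)$ and $h = h'$, or $g = g'$ and $hh' \in E(H)$. A set $S$ of edges of a graph $G$ is an edge general position set if no geodesic (shortest path) of $G$ contains three edges of $S$; $\mathrm{gp_e}(G)$ is the maximum cardinality of an edge general position set of $G$, and an edge general position set of maximum cardinality is called a $\mathrm{gp_e}$-set. *)

theory Defs
  imports Main
begin

text \<open>A (simple, undirected) graph is given by a vertex set V and a symmetric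
  adjacency relation E; only adjacencies between vertices of V matter.\<close>

definition path_V :: "nat \<Rightarrow> nat set" where
  "path_V n = {0..<n}"

definition path_adj :: "nat \<Rightarrow> nat \<Rightarrow> bool" where
  "path_adj i j \<longleftrightarrow> (i + 1 = j \<or> j + 1 = i)"

definition cart_V :: "'a set \<Rightarrow> 'b set \<Rightarrow> ('a \<times> 'b) set" where
  "cart_V VG VH = VG \<times> VH"

definition cart_adj :: "('a \<Rightarrow> 'a \<Rightarrow> bool) \<Rightarrow> ('b \<Rightarrow> 'b \<Rightarrow> bool)
    \<Rightarrow> ('a \<times> 'b) \<Rightarrow> ('a \<times> 'b) \<Rightarrow> bool" where
  "cart_adj EG EH x y \<longleftrightarrow>
     (EG (fst x) (fst y) \<and> snd x = snd y) \<or> (fst x = fst y \<and> EH (snd x) (snd y))"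

definition graph_edges :: "'a set \<Rightarrow> ('a \<Rightarrow> 'a \<Rightarrow> bool) \<Rightarrow> 'a set set" where
  "graph_edges V E = {{u, v} | u v. u \<in> V \<and> v \<in> V \<and> E u v}"

definition walk :: "'a set \<Rightarrow> ('a \<Rightarrow> 'a \<Rightarrow> bool) \<Rightarrow> 'a list \<Rightarrow> bool" where
  "walk V E xs \<longleftrightarrow> xs \<noteq> [] \<and> set xs \<subseteq> V \<and>
     (\<forall>i. Suc i < length xs \<longrightarrow> E (xs ! i) (xs ! Suc i))"

definition geodesic :: "'a set \<Rightarrow> ('a \<Rightarrow> 'a \<Rightarrow> bool) \<Rightarrow> 'a list \<Rightarrow> bool" where
  "geodesic V E xs \<longleftrightarrow> walk V E xs \<and>
     (\<forall>ys. walk V E ys \<and> hd ys = hd xs \<and> last ys = last xs \<longrightarrow> length xs \<le> length ys)"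

definition walk_edges :: "'a list \<Rightarrow> 'a set set" where
  "walk_edges xs = {{xs ! i, xs ! Suc i} | i. Suc i < length xs}"

definition edge_gp_set :: "'a set \<Rightarrow> ('a \<Rightarrow> 'a \<Rightarrow> bool) \<Rightarrow> 'a set set \<Rightarrow> bool" where
  "edge_gp_set V E S \<longleftrightarrow> S \<subseteq> graph_edges V E \<and>
     (\<forall>xs. geodesic V E xs \<longrightarrow> card (S \<inter> walk_edges xs) < 3)"

definition gpe :: "'a set \<Rightarrow> ('a \<Rightarrow> 'a \<Rightarrow> bool) \<Rightarrow> nat" where
  "gpe V E = Max {card S | S. edge_gp_set V E S}"

definition gpe_set :: "'a set \<Rightarrow> ('a \<Rightarrow> 'a \<Rightarrow> bool) \<Rightarrow> 'a set set \<Rightarrow> bool" where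
  "gpe_set V E S \<longleftrightarrow> edge_gp_set V E S \<and> card S = gpe V E"

end

theory Submission
  imports Defs
begin

text \<open>
  In the grid P_r \<box> P_s the distance is the Manhattan distance, so the geodesics are exactly the
  walks whose length is the Manhattan distance of their ends; along a geodesic both coordinates
  change monotonically.

  Let S be an edge general position set, let a(y) count its edges in row y and L its edges in the
  two border columns. Row y together with the lower part of one border column and the upper part
  of the other lies on a geodesic, and so does the mirror image; hence 2 a(y) + L \<le> 4, and
  symmetrically for columns. Summing over the s - 2 inner rows and the r - 2 inner columns gives
  |S| \<le> 2(r - 2) + 2(s - 2) as soon as r, s \<ge> 5, with equality only if the border lines carry no
  edge of S and every inner line carries exactly two. In that case the two edges of an inner row
  are its first and its last edge: otherwise a geodesic running along the row and turning into a
  neighbouring inner column would contain three edges of S.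

  Conversely, these ``spokes'' are in general position: a geodesic crosses the gap between two
  adjacent columns (or rows) at most once, so it contains at most one spoke of each side of the
  boundary, and it cannot visit three sides, since none of three such vertices lies between the
  other two.
\<close>


section \<open>Walks\<close>

lemma walk_iff_successively:
  "walk V E xs \<longleftrightarrow> xs \<noteq> [] \<and> set xs \<subseteq> V \<and> successively E xs"
  unfolding walk_def successively_conv_nth by blast

lemma walk_append:
  assumes "walk V E xs" "walk V E ys" "last xs = hd ys"
  shows "walk V E (butlast xs @ ys)"
proof -
  have "butlast xs @ [hd ys] = xs"
    using assms(1,3) unfolding walk_def by (metis append_butlast_last_id)
  then have "successively E (butlast xs @ [hd ys])"
    using assms(1) by (simp add: walk_iff_successively)
  then show ?thesis
    using assms(1,2) in_set_butlastD
    by (fastforce simp: walk_iff_successively successively_append_iff successively_Cons)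
qed

lemma walk_rev:
  assumes "walk V E xs" "\<And>u v. E u v \<Longrightarrow> E v u"
  shows "walk V E (rev xs)"
  using assms by (auto simp: walk_iff_successively elim: successively_mono)

lemma walk_edges_eq_image: "walk_edges xs = (\<lambda>i. {xs ! i, xs ! Suc i}) ` {i. Suc i < length xs}"
  unfolding walk_edges_def by blast

lemma finite_walk_edges: "finite (walk_edges xs)"
  unfolding walk_edges_eq_image by (rule finite_imageI, rule finite_subset[of _ "{..<length xs}"]) auto

lemma walk_edges_subset_set: "e \<in> walk_edges xs \<Longrightarrow> e \<subseteq> set xs"
  unfolding walk_edges_def by auto

lemma walk_edges_append_left: "walk_edges xs \<subseteq> walk_edges (xs @ ys)"
proof
  fix e assume "e \<in> walk_edges xs"
  then obtain i where "Suc i < length xs" "e = {xs ! i, xs ! Suc i}"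
    unfolding walk_edges_def by blast
  then show "e \<in> walk_edges (xs @ ys)"
    unfolding walk_edges_def by (intro CollectI exI[of _ i]) (simp add: nth_append)
qed

lemma walk_edges_append_right: "walk_edges ys \<subseteq> walk_edges (xs @ ys)"
proof
  fix e assume "e \<in> walk_edges ys"
  then obtain i where "Suc i < length ys" "e = {ys ! i, ys ! Suc i}"
    unfolding walk_edges_def by blast
  then show "e \<in> walk_edges (xs @ ys)"
    unfolding walk_edges_def
    by (intro CollectI exI[of _ "length xs + i"]) (simp add: nth_append)
qed

lemma walk_edges_rev: "walk_edges (rev xs) = walk_edges xs"
proof -
  have "walk_edges xs \<subseteq> walk_edges (rev xs)" for xs :: "'a list"
  proof
    fix e assume "e \<in> walk_edges xs"
    then obtain i where i: "Suc i < length xs" "e = {xs ! i, xs ! Suc i}"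
      unfolding walk_edges_def by blast
    let ?j = "length xs - Suc (Suc i)"
    have "rev xs ! ?j = xs ! Suc i" "rev xs ! Suc ?j = xs ! i"
      using i by (simp_all add: rev_nth Suc_diff_Suc)
    then show "e \<in> walk_edges (rev xs)"
      unfolding walk_edges_def using i by (intro CollectI exI[of _ ?j]) auto
  qed
  from this[of xs] this[of "rev xs"] show ?thesis by simp
qed

lemma walk_edges_map: "walk_edges (map f xs) = image f ` walk_edges xs"
  unfolding walk_edges_eq_image by (simp add: image_image)

definition walk_covering ::
    "'a set \<Rightarrow> ('a \<Rightarrow> 'a \<Rightarrow> bool) \<Rightarrow> 'a \<Rightarrow> 'a \<Rightarrow> nat \<Rightarrow> 'a set set \<Rightarrow> bool" where
  "walk_covering V E p q n F \<longleftrightarrow>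
     (\<exists>xs. walk V E xs \<and> hd xs = p \<and> last xs = q \<and> length xs = Suc n \<and> F \<subseteq> walk_edges xs)"

lemma walk_covering_append:
  assumes "walk_covering V E p q m F" "walk_covering V E q w n G"
  shows "walk_covering V E p w (m + n) (F \<union> G)"
proof -
  obtain xs where xs: "walk V E xs" "hd xs = p" "last xs = q" "length xs = Suc m" "F \<subseteq> walk_edges xs"
    using assms(1) unfolding walk_covering_def by blast
  obtain ys where ys: "walk V E ys" "hd ys = q" "last ys = w" "length ys = Suc n" "G \<subseteq> walk_edges ys"
    using assms(2) unfolding walk_covering_def by blast
  have "xs \<noteq> []" "ys \<noteq> []"
    using xs(1) ys(1) by (simp_all add: walk_def)
  then have xs_eq: "xs = butlast xs @ [hd ys]"
    using xs(3) ys(2) by (metis append_butlast_last_id)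
  let ?zs = "butlast xs @ ys"
  have "hd ?zs = p"
    using xs(2) xs_eq by (cases "butlast xs") auto
  moreover have "last ?zs = w" "length ?zs = Suc (m + n)"
    using \<open>ys \<noteq> []\<close> xs(4) ys(3,4) by auto
  moreover have "walk_edges xs \<subseteq> walk_edges ?zs"
    using walk_edges_append_left[of "butlast xs @ [hd ys]" "tl ys"] xs_eq \<open>ys \<noteq> []\<close>
    by (metis append.assoc append_Cons append_Nil list.collapse)
  then have "F \<union> G \<subseteq> walk_edges ?zs"
    using xs(5) ys(5) walk_edges_append_right[of ys "butlast xs"] by blast
  moreover have "walk V E ?zs"
    using walk_append[OF xs(1) ys(1)] xs(3) ys(2) by simp
  ultimately show ?thesis
    unfolding walk_covering_def by blast
qed

lemma walk_covering_rev:
  assumes "walk_covering V E p q n F" "\<And>u v. E u v \<Longrightarrow> E v u"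
  shows "walk_covering V E q p n F"
proof -
  obtain xs where "walk V E xs" "hd xs = p" "last xs = q" "length xs = Suc n" "F \<subseteq> walk_edges xs"
    using assms(1) unfolding walk_covering_def by blast
  then show ?thesis
    unfolding walk_covering_def using walk_rev[OF _ assms(2)]
    by (intro exI[of _ "rev xs"]) (simp add: hd_rev last_rev walk_edges_rev)
qed

lemma walk_covering_path:
  assumes "a \<le> b" "\<And>k. a \<le> k \<Longrightarrow> k \<le> b \<Longrightarrow> f k \<in> V"
    "\<And>k. a \<le> k \<Longrightarrow> k < b \<Longrightarrow> E (f k) (f (Suc k))"
  shows "walk_covering V E (f a) (f b) (b - a) ((\<lambda>k. {f k, f (Suc k)}) ` {a..<b})"
proof -
  let ?xs = "map f [a..<Suc b]"
  have "walk V E ?xs"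
    unfolding walk_def using assms by (auto simp del: upt_Suc simp: nth_Cons')
  moreover have "{f k, f (Suc k)} \<in> walk_edges ?xs" if "a \<le> k" "k < b" for k
  proof -
    have "?xs ! (k - a) = f k" "?xs ! Suc (k - a) = f (Suc k)" "Suc (k - a) < length ?xs"
      using that by (simp_all del: upt_Suc add: Suc_diff_le)
    then show ?thesis
      unfolding walk_edges_def by (metis (mono_tags, lifting) mem_Collect_eq)
  qed
  moreover have "hd ?xs = f a" "last ?xs = f b"
    using assms(1) by (simp_all del: upt_Suc add: hd_map last_map)
  ultimately show ?thesis
    unfolding walk_covering_def using assms(1) by (intro exI[of _ ?xs]) auto
qed

lemma edge_gp_set_card_Int_le:
  assumes "edge_gp_set V E S" "geodesic V E xs" "F \<subseteq> walk_edges xs"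
  shows "card (S \<inter> F) \<le> 2"
proof -
  have "card (S \<inter> F) \<le> card (S \<inter> walk_edges xs)"
    using assms(3) finite_walk_edges by (intro card_mono) auto
  also have "\<dots> < 3"
    using assms(1,2) unfolding edge_gp_set_def by blast
  finally show ?thesis
    by simp
qed

section \<open>Geodesics in the grid\<close>

abbreviation grid :: "nat \<Rightarrow> nat \<Rightarrow> (nat \<times> nat) set" where
  "grid r s \<equiv> cart_V (path_V r) (path_V s)"

abbreviation grid_adj :: "nat \<times> nat \<Rightarrow> nat \<times> nat \<Rightarrow> bool" where
  "grid_adj \<equiv> cart_adj path_adj path_adj"

definition adist :: "nat \<Rightarrow> nat \<Rightarrow> nat" where
  "adist a b = (a - b) + (b - a)"

definition manhattan :: "nat \<times> nat \<Rightarrow> nat \<times> nat \<Rightarrow> nat" where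
  "manhattan p q = adist (fst p) (fst q) + adist (snd p) (snd q)"

lemma adist_self [simp]: "adist a a = 0"
  unfolding adist_def by simp

lemma adist_commute: "adist a b = adist b a"
  unfolding adist_def by simp

lemma adist_triangle: "adist a c \<le> adist a b + adist b c"
  unfolding adist_def by arith

lemma adist_add_imp_between: "adist a c = adist a b + adist b c \<Longrightarrow> min a c \<le> b \<and> b \<le> max a c"
  unfolding adist_def by (simp add: min_def max_def) arith

lemma mem_grid: "p \<in> grid r s \<longleftrightarrow> fst p < r \<and> snd p < s"
  by (cases p) (auto simp: cart_V_def path_V_def)

lemma grid_adj_iff_manhattan: "grid_adj p q \<longleftrightarrow> manhattan p q = 1"
proof -
  have "adist a b = 0 \<longleftrightarrow> a = b" "adist a b = 1 \<longleftrightarrow> a + 1 = b \<or> b + 1 = a" for a b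
    unfolding adist_def by arith+
  moreover have "manhattan p q = 1 \<longleftrightarrow>
      adist (fst p) (fst q) = 1 \<and> adist (snd p) (snd q) = 0 \<or>
      adist (fst p) (fst q) = 0 \<and> adist (snd p) (snd q) = 1"
    unfolding manhattan_def by arith
  ultimately show ?thesis
    unfolding cart_adj_def path_adj_def by auto
qed

lemma manhattan_commute: "manhattan p q = manhattan q p"
  unfolding manhattan_def by (simp add: adist_commute)

lemma manhattan_triangle: "manhattan p w \<le> manhattan p q + manhattan q w"
  unfolding manhattan_def
  using adist_triangle[of "fst p" "fst w" "fst q"] adist_triangle[of "snd p" "snd w" "snd q"]
  by linarith

lemma manhattan_add_imp_between:
  assumes "manhattan p w = manhattan p q + manhattan q w"
  shows "min (fst p) (fst w) \<le> fst q \<and> fst q \<le> max (fst p) (fst w)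
    \<and> min (snd p) (snd w) \<le> snd q \<and> snd q \<le> max (snd p) (snd w)"
proof -
  have "adist (fst p) (fst w) = adist (fst p) (fst q) + adist (fst q) (fst w)"
    "adist (snd p) (snd w) = adist (snd p) (snd q) + adist (snd q) (snd w)"
    using assms adist_triangle[of "fst p" "fst w" "fst q"] adist_triangle[of "snd p" "snd w" "snd q"]
    unfolding manhattan_def by linarith+
  then show ?thesis
    using adist_add_imp_between by blast
qed

lemma grid_adj_commute: "grid_adj p q \<Longrightarrow> grid_adj q p"
  by (simp add: grid_adj_iff_manhattan manhattan_commute)

definition hedge :: "nat \<Rightarrow> nat \<Rightarrow> (nat \<times> nat) set" where
  "hedge x y = {(x, y), (Suc x, y)}"

definition vedge :: "nat \<Rightarrow> nat \<Rightarrow> (nat \<times> nat) set" where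
  "vedge x y = {(x, y), (x, Suc y)}"

definition row_edges :: "nat \<Rightarrow> nat \<Rightarrow> nat \<Rightarrow> (nat \<times> nat) set set" where
  "row_edges y a b = (\<lambda>k. hedge k y) ` {min a b..<max a b}"

definition col_edges :: "nat \<Rightarrow> nat \<Rightarrow> nat \<Rightarrow> (nat \<times> nat) set set" where
  "col_edges x a b = (\<lambda>k. vedge x k) ` {min a b..<max a b}"

lemma hedge_eq_iff [simp]: "hedge x y = hedge x' y' \<longleftrightarrow> x = x' \<and> y = y'"
  unfolding hedge_def by (auto simp: doubleton_eq_iff)

lemma vedge_eq_iff [simp]: "vedge x y = vedge x' y' \<longleftrightarrow> x = x' \<and> y = y'"
  unfolding vedge_def by (auto simp: doubleton_eq_iff)

lemma hedge_neq_vedge [simp]: "hedge x y \<noteq> vedge x' y'" "vedge x' y' \<noteq> hedge x y"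
  unfolding hedge_def vedge_def by (auto simp: doubleton_eq_iff)

lemma row_edges_commute: "row_edges y a b = row_edges y b a"
  unfolding row_edges_def by (simp add: min.commute max.commute)

lemma col_edges_commute: "col_edges x a b = col_edges x b a"
  unfolding col_edges_def by (simp add: min.commute max.commute)

lemma mem_row_edges: "e \<in> row_edges y a b \<longleftrightarrow> (\<exists>k. min a b \<le> k \<and> k < max a b \<and> e = hedge k y)"
  unfolding row_edges_def by force

lemma mem_col_edges: "e \<in> col_edges x a b \<longleftrightarrow> (\<exists>k. min a b \<le> k \<and> k < max a b \<and> e = vedge x k)"
  unfolding col_edges_def by force

lemma hedge_mem_row_edges [simp]: "hedge k y \<in> row_edges y' a b \<longleftrightarrow> y = y' \<and> min a b \<le> k \<and> k < max a b"
  unfolding row_edges_def by auto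

lemma vedge_mem_col_edges [simp]: "vedge x k \<in> col_edges x' a b \<longleftrightarrow> x = x' \<and> min a b \<le> k \<and> k < max a b"
  unfolding col_edges_def by auto

lemma hedge_not_mem_col_edges [simp]: "hedge k y \<notin> col_edges x a b"
  unfolding col_edges_def by auto

lemma row_edges_Int_col_edges [simp]: "row_edges y a b \<inter> col_edges x c d = {}"
  unfolding row_edges_def by auto

lemma col_edges_Int_row_edges [simp]: "col_edges x c d \<inter> row_edges y a b = {}"
  unfolding row_edges_def by auto

lemma col_edges_empty [simp]: "col_edges x a a = {}"
  unfolding col_edges_def by simp

lemma col_edges_split: "a \<le> b \<Longrightarrow> b \<le> c \<Longrightarrow> col_edges x a c = col_edges x a b \<union> col_edges x b c"
  unfolding col_edges_def by (auto simp: image_iff)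

lemma col_edges_disjoint_adjacent: "a \<le> b \<Longrightarrow> b \<le> c \<Longrightarrow> col_edges x a b \<inter> col_edges x b c = {}"
  unfolding col_edges_def by auto

lemma col_edges_disjoint: "x \<noteq> x' \<Longrightarrow> col_edges x a b \<inter> col_edges x' c d = {}"
  unfolding col_edges_def by auto

lemma walk_covering_row:
  assumes "a < r" "b < r" "y < s"
  shows "walk_covering (grid r s) grid_adj (a, y) (b, y) (manhattan (a, y) (b, y)) (row_edges y a b)"
proof -
  have *: "walk_covering (grid r s) grid_adj (a, y) (b, y) (manhattan (a, y) (b, y)) (row_edges y a b)"
    if "a \<le> b" "b < r" for a b
    using walk_covering_path[of a b "\<lambda>k. (k, y)" "grid r s" grid_adj] that assms(3)
    by (simp add: mem_grid grid_adj_iff_manhattan manhattan_def adist_def row_edges_def hedge_def)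
  show ?thesis
  proof (cases "a \<le> b")
    case True
    then show ?thesis using * assms by blast
  next
    case False
    then show ?thesis
      using walk_covering_rev[OF *[of b a] grid_adj_commute] assms
      by (simp add: manhattan_commute row_edges_commute)
  qed
qed

lemma walk_covering_col:
  assumes "x < r" "a < s" "b < s"
  shows "walk_covering (grid r s) grid_adj (x, a) (x, b) (manhattan (x, a) (x, b)) (col_edges x a b)"
proof -
  have *: "walk_covering (grid r s) grid_adj (x, a) (x, b) (manhattan (x, a) (x, b)) (col_edges x a b)"
    if "a \<le> b" "b < s" for a b
    using walk_covering_path[of a b "\<lambda>k. (x, k)" "grid r s" grid_adj] that assms(1)
    by (simp add: mem_grid grid_adj_iff_manhattan manhattan_def adist_def col_edges_def vedge_def)
  show ?thesis
  proof (cases "a \<le> b")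
    case True
    then show ?thesis using * assms by blast
  next
    case False
    then show ?thesis
      using walk_covering_rev[OF *[of b a] grid_adj_commute] assms
      by (simp add: manhattan_commute col_edges_commute)
  qed
qed

lemma walk_covering_corner:
  assumes "x1 < r" "x2 < r" "y1 < s" "y2 < s"
  shows "walk_covering (grid r s) grid_adj (x1, y1) (x2, y2) (manhattan (x1, y1) (x2, y2))
           (row_edges y1 x1 x2 \<union> col_edges x2 y1 y2)"
proof -
  have "manhattan (x1, y1) (x2, y2) = manhattan (x1, y1) (x2, y1) + manhattan (x2, y1) (x2, y2)"
    unfolding manhattan_def by simp
  then show ?thesis
    using walk_covering_append[OF walk_covering_row walk_covering_col] assms by simp
qed

lemma walk_manhattan_le:
  assumes "walk V grid_adj xs" "i \<le> j" "j < length xs"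
  shows "manhattan (xs ! i) (xs ! j) \<le> j - i"
  using assms(2,3)
proof (induction j)
  case 0
  then show ?case by (simp add: manhattan_def)
next
  case (Suc j)
  show ?case
  proof (cases "i = Suc j")
    case True
    then show ?thesis by (simp add: manhattan_def)
  next
    case False
    then have "manhattan (xs ! i) (xs ! j) \<le> j - i"
      using Suc by simp
    moreover have "manhattan (xs ! j) (xs ! Suc j) = 1"
      using assms(1) Suc.prems unfolding walk_def grid_adj_iff_manhattan by blast
    ultimately show ?thesis
      using manhattan_triangle[of "xs ! i" "xs ! Suc j" "xs ! j"] False Suc.prems by linarith
  qed
qed

lemma walk_manhattan_hd_last_less:
  assumes "walk V grid_adj xs"
  shows "manhattan (hd xs) (last xs) < length xs"
proof -
  have "xs \<noteq> []"
    using assms by (simp add: walk_def)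
  then have "manhattan (hd xs) (last xs) \<le> length xs - 1" "0 < length xs"
    using walk_manhattan_le[OF assms, of 0 "length xs - 1"]
    by (simp_all add: hd_conv_nth last_conv_nth)
  then show ?thesis
    by linarith
qed

lemma geodesic_grid_iff:
  "geodesic (grid r s) grid_adj xs \<longleftrightarrow>
     walk (grid r s) grid_adj xs \<and> length xs = Suc (manhattan (hd xs) (last xs))"
proof
  assume geo: "geodesic (grid r s) grid_adj xs"
  then have w: "walk (grid r s) grid_adj xs"
    by (simp add: geodesic_def)
  then have "hd xs \<in> grid r s" "last xs \<in> grid r s"
    by (auto simp: walk_def)
  then obtain ys where "walk (grid r s) grid_adj ys" "hd ys = hd xs" "last ys = last xs"
      "length ys = Suc (manhattan (hd xs) (last xs))"
    using walk_covering_corner[of "fst (hd xs)" r "fst (last xs)" "snd (hd xs)" s "snd (last xs)"]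
    unfolding walk_covering_def by (auto simp: mem_grid)
  then show "walk (grid r s) grid_adj xs \<and> length xs = Suc (manhattan (hd xs) (last xs))"
    using geo w walk_manhattan_hd_last_less[OF w] unfolding geodesic_def by fastforce
next
  assume "walk (grid r s) grid_adj xs \<and> length xs = Suc (manhattan (hd xs) (last xs))"
  then show "geodesic (grid r s) grid_adj xs"
    unfolding geodesic_def using walk_manhattan_hd_last_less by fastforce
qed

lemma geodesic_if_walk_covering:
  assumes "walk_covering (grid r s) grid_adj p q (manhattan p q) F"
  shows "\<exists>xs. geodesic (grid r s) grid_adj xs \<and> F \<subseteq> walk_edges xs"
  using assms unfolding walk_covering_def geodesic_grid_iff by auto

lemma geodesic_covering_col_row_col:
  assumes "x1 < r" "x2 < r" "y1 < s" "y2 < s" "y3 < s"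
    and "y1 \<le> y2 \<and> y2 \<le> y3 \<or> y3 \<le> y2 \<and> y2 \<le> y1"
  shows "\<exists>xs. geodesic (grid r s) grid_adj xs \<and>
           col_edges x1 y1 y2 \<union> row_edges y2 x1 x2 \<union> col_edges x2 y2 y3 \<subseteq> walk_edges xs"
proof -
  have "manhattan (x1, y1) (x2, y3) = manhattan (x1, y1) (x1, y2) + manhattan (x1, y2) (x2, y3)"
    using assms(6) unfolding manhattan_def adist_def by auto
  then have "walk_covering (grid r s) grid_adj (x1, y1) (x2, y3) (manhattan (x1, y1) (x2, y3))
      (col_edges x1 y1 y2 \<union> (row_edges y2 x1 x2 \<union> col_edges x2 y2 y3))"
    using walk_covering_append[OF walk_covering_col walk_covering_corner] assms(1-5) by simp
  then show ?thesis
    using geodesic_if_walk_covering by (metis sup_assoc)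
qed

lemma geodesic_manhattan_nth:
  assumes "geodesic (grid r s) grid_adj xs" "i \<le> j" "j < length xs"
  shows "manhattan (xs ! i) (xs ! j) = j - i"
proof -
  have w: "walk (grid r s) grid_adj xs" and len: "length xs = Suc (manhattan (hd xs) (last xs))"
    using assms(1) unfolding geodesic_grid_iff by auto
  then have "xs \<noteq> []"
    by (simp add: walk_def)
  then have hd: "hd xs = xs ! 0" and last: "last xs = xs ! (length xs - 1)"
    by (simp_all add: hd_conv_nth last_conv_nth)
  have "manhattan (hd xs) (last xs) \<le> manhattan (hd xs) (xs ! i) + manhattan (xs ! i) (last xs)"
    by (rule manhattan_triangle)
  moreover have "manhattan (xs ! i) (last xs) \<le> manhattan (xs ! i) (xs ! j) + manhattan (xs ! j) (last xs)"
    by (rule manhattan_triangle)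
  moreover have "manhattan (hd xs) (xs ! i) \<le> i"
    using walk_manhattan_le[OF w, of 0 i] assms(2,3) hd by simp
  moreover have "manhattan (xs ! i) (xs ! j) \<le> j - i"
    using walk_manhattan_le[OF w, of i j] assms(2,3) by simp
  moreover have "manhattan (xs ! j) (last xs) \<le> length xs - 1 - j"
    using walk_manhattan_le[OF w, of j "length xs - 1"] assms(3) last by simp
  ultimately show ?thesis
    using assms(2,3) len by linarith
qed

lemma geodesic_hedge_unique:
  assumes geo: "geodesic (grid r s) grid_adj xs"
    and "hedge c y1 \<in> walk_edges xs" "hedge c y2 \<in> walk_edges xs"
  shows "y1 = y2"
proof -
  have step: "\<exists>i. Suc i < length xs \<and> fst (xs ! i) \<in> {c, Suc c} \<and> fst (xs ! Suc i) \<in> {c, Suc c}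
      \<and> snd (xs ! i) = y \<and> snd (xs ! Suc i) = y"
    if e: "hedge c y \<in> walk_edges xs" for y
  proof -
    obtain i where "Suc i < length xs" "{xs ! i, xs ! Suc i} = hedge c y"
      using e unfolding walk_edges_def by blast
    then show ?thesis
      unfolding hedge_def by (intro exI[of _ i]) (auto simp: doubleton_eq_iff)
  qed
  \<comment> \<open>Crossing the gap between columns c and c+1 twice would make the geodesic longer than
    the distance between the outer ends of the two crossings.\<close>
  have no_two: False
    if "Suc i \<le> j" "Suc j < length xs" "fst (xs ! i) \<in> {c, Suc c}" "fst (xs ! Suc j) \<in> {c, Suc c}"
      "snd (xs ! i) = snd (xs ! Suc i)" "snd (xs ! j) = snd (xs ! Suc j)" for i j
  proof -
    have "manhattan (xs ! i) (xs ! Suc j) = Suc j - i" "manhattan (xs ! Suc i) (xs ! j) = j - Suc i"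
      using geodesic_manhattan_nth[OF geo] that(1,2) by simp_all
    moreover have "adist (fst (xs ! i)) (fst (xs ! Suc j)) \<le> 1"
      using that(3,4) by (auto simp: adist_def)
    then have "manhattan (xs ! i) (xs ! Suc j) \<le> 1 + manhattan (xs ! Suc i) (xs ! j)"
      using that(5,6) unfolding manhattan_def by simp
    ultimately show False
      using that(1) by linarith
  qed
  obtain i where i: "Suc i < length xs" "fst (xs ! i) \<in> {c, Suc c}" "fst (xs ! Suc i) \<in> {c, Suc c}"
      "snd (xs ! i) = y1" "snd (xs ! Suc i) = y1"
    using step assms(2) by blast
  obtain j where j: "Suc j < length xs" "fst (xs ! j) \<in> {c, Suc c}" "fst (xs ! Suc j) \<in> {c, Suc c}"
      "snd (xs ! j) = y2" "snd (xs ! Suc j) = y2"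
    using step assms(3) by blast
  have "i = j"
    using no_two[of i j] no_two[of j i] i j by (metis Suc_leI linorder_neqE_nat)
  then show ?thesis
    using i(4) j(4) by simp
qed

lemma graph_edges_grid:
  "graph_edges (grid r s) grid_adj = (\<Union>y<s. row_edges y 0 (r - 1)) \<union> (\<Union>x<r. col_edges x 0 (s - 1))"
  (is "_ = ?R")
proof (intro equalityI subsetI)
  fix e assume "e \<in> graph_edges (grid r s) grid_adj"
  then obtain a b c d where e: "e = {(a, b), (c, d)}" "a < r" "b < s" "c < r" "d < s"
      and adj: "grid_adj (a, b) (c, d)"
    unfolding graph_edges_def by (force simp: mem_grid)
  from adj consider "c = Suc a" "d = b" | "a = Suc c" "d = b" | "c = a" "d = Suc b" | "c = a" "b = Suc d"
    unfolding cart_adj_def path_adj_def by auto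
  then show "e \<in> ?R"
  proof cases
    case 1
    then have "e = hedge a b" using e(1) by (simp add: hedge_def)
    then show ?thesis using 1 e(3,4) by auto
  next
    case 2
    then have "e = hedge c b" using e(1) by (auto simp: hedge_def)
    then show ?thesis using 2 e(2,3) by auto
  next
    case 3
    then have "e = vedge a b" using e(1) by (simp add: vedge_def)
    then show ?thesis using 3 e(2,5) by auto
  next
    case 4
    then have "e = vedge a d" using e(1) by (auto simp: vedge_def)
    then show ?thesis using 4 e(2,3) by auto
  qed
next
  fix e assume "e \<in> ?R"
  then obtain p q where "e = {p, q}" "p \<in> grid r s" "q \<in> grid r s" "manhattan p q = 1"
    unfolding row_edges_def col_edges_def hedge_def vedge_def
    by (auto simp: mem_grid manhattan_def adist_def)
  then show "e \<in> graph_edges (grid r s) grid_adj"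
    unfolding graph_edges_def grid_adj_iff_manhattan by blast
qed

lemma finite_graph_edges_grid: "finite (graph_edges (grid r s) grid_adj)"
  unfolding graph_edges_grid row_edges_def col_edges_def by auto

lemma edge_gp_set_grid_finite: "edge_gp_set (grid r s) grid_adj S \<Longrightarrow> finite S"
  unfolding edge_gp_set_def using finite_graph_edges_grid finite_subset by blast

lemma edge_gp_set_grid_eq_lines:
  assumes "edge_gp_set (grid r s) grid_adj S"
  shows "S = (\<Union>y<s. S \<inter> row_edges y 0 (r - 1)) \<union> (\<Union>x<r. S \<inter> col_edges x 0 (s - 1))"
  using assms unfolding edge_gp_set_def graph_edges_grid by blast

section \<open>Transposition\<close>

text \<open>The transposition (x, y) \<mapsto> (y, x) is an isomorphism from the grid on r \<times> s vertices onto the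
  grid on s \<times> r vertices; it turns every statement about columns into one about rows.\<close>

lemma manhattan_swap: "manhattan (prod.swap p) (prod.swap q) = manhattan p q"
  unfolding manhattan_def by simp

lemma geodesic_swap:
  assumes "geodesic (grid r s) grid_adj xs"
  shows "geodesic (grid s r) grid_adj (map prod.swap xs)"
  using assms
  by (auto simp: geodesic_grid_iff walk_def mem_grid grid_adj_iff_manhattan manhattan_swap hd_map last_map)

lemma image_swap_hedge [simp]: "prod.swap ` hedge x y = vedge y x"
  unfolding hedge_def vedge_def by simp

lemma image_swap_vedge [simp]: "prod.swap ` vedge x y = hedge y x"
  unfolding hedge_def vedge_def by simp

lemma geodesic_vedge_unique:
  assumes "geodesic (grid r s) grid_adj xs"
    and "vedge x1 c \<in> walk_edges xs" "vedge x2 c \<in> walk_edges xs"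
  shows "x1 = x2"
proof -
  have "hedge c x \<in> walk_edges (map prod.swap xs)" if "vedge x c \<in> walk_edges xs" for x
    using that unfolding walk_edges_map by (metis image_eqI image_swap_vedge)
  then show ?thesis
    using geodesic_hedge_unique[OF geodesic_swap[OF assms(1)]] assms(2,3) by blast
qed

definition swap_edges :: "('a \<times> 'b) set set \<Rightarrow> ('b \<times> 'a) set set" where
  "swap_edges S = image prod.swap ` S"

lemma swap_edges_swap_edges [simp]: "swap_edges (swap_edges S) = S"
  unfolding swap_edges_def by (simp add: image_image)

lemma inj_image_swap: "inj (image prod.swap)"
  by (intro injI) (simp add: inj_image_eq_iff)

lemma card_swap_edges [simp]: "card (swap_edges S) = card S"
  unfolding swap_edges_def by (metis card_image inj_image_swap inj_on_subset subset_UNIV)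

lemma swap_edges_Int: "swap_edges (A \<inter> B) = swap_edges A \<inter> swap_edges B"
  unfolding swap_edges_def by (simp add: image_Int[OF inj_image_swap])

lemma swap_edges_Int_eq: "swap_edges S \<inter> T = swap_edges (S \<inter> swap_edges T)"
  by (simp add: swap_edges_Int)

lemma swap_edges_empty_iff [simp]: "swap_edges A = {} \<longleftrightarrow> A = {}"
  unfolding swap_edges_def by simp

lemma swap_edges_row_edges [simp]: "swap_edges (row_edges y a b) = col_edges y a b"
  unfolding swap_edges_def row_edges_def col_edges_def by (simp add: image_image)

lemma swap_edges_col_edges [simp]: "swap_edges (col_edges x a b) = row_edges x a b"
  unfolding swap_edges_def row_edges_def col_edges_def by (simp add: image_image)

lemma swap_edges_graph_edges_grid:
  "swap_edges (graph_edges (grid r s) grid_adj) = graph_edges (grid s r) grid_adj"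
  unfolding graph_edges_grid swap_edges_def by (simp add: image_Un image_UN Un_commute flip: swap_edges_def)

lemma edge_gp_set_swap:
  assumes "edge_gp_set (grid r s) grid_adj S"
  shows "edge_gp_set (grid s r) grid_adj (swap_edges S)"
  unfolding edge_gp_set_def
proof (intro conjI allI impI)
  have "swap_edges S \<subseteq> swap_edges (graph_edges (grid r s) grid_adj)"
    using assms unfolding edge_gp_set_def swap_edges_def by (rule image_mono[OF conjunct1])
  then show "swap_edges S \<subseteq> graph_edges (grid s r) grid_adj"
    by (simp only: swap_edges_graph_edges_grid)
  fix xs assume "geodesic (grid s r) grid_adj xs"
  then have geo: "geodesic (grid r s) grid_adj (map prod.swap xs)"
    by (rule geodesic_swap)
  have "walk_edges xs = swap_edges (walk_edges (map prod.swap xs))"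
    by (simp add: walk_edges_map swap_edges_def image_image)
  then have "card (swap_edges S \<inter> walk_edges xs) = card (S \<inter> walk_edges (map prod.swap xs))"
    by (metis card_swap_edges swap_edges_Int)
  then show "card (swap_edges S \<inter> walk_edges xs) < 3"
    using assms geo unfolding edge_gp_set_def by simp
qed

section \<open>The spokes\<close>

datatype side = Left | Right | Bottom | Top

lemma UNIV_side: "(UNIV :: side set) = {Left, Right, Bottom, Top}"
  using side.exhaust by auto

fun on_side :: "nat \<Rightarrow> nat \<Rightarrow> side \<Rightarrow> nat \<times> nat \<Rightarrow> bool" where
  "on_side r s Left p \<longleftrightarrow> fst p = 0 \<and> snd p \<in> {1..s - 2}"
| "on_side r s Right p \<longleftrightarrow> fst p = r - 1 \<and> snd p \<in> {1..s - 2}"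
| "on_side r s Bottom p \<longleftrightarrow> snd p = 0 \<and> fst p \<in> {1..r - 2}"
| "on_side r s Top p \<longleftrightarrow> snd p = s - 1 \<and> fst p \<in> {1..r - 2}"

text \<open>The edges joining the non-corner vertices of side t of the boundary to their neighbours
  inside the grid.\<close>
fun side_edges :: "nat \<Rightarrow> nat \<Rightarrow> side \<Rightarrow> (nat \<times> nat) set set" where
  "side_edges r s Left = (\<lambda>y. hedge 0 y) ` {1..s - 2}"
| "side_edges r s Right = (\<lambda>y. hedge (r - 2) y) ` {1..s - 2}"
| "side_edges r s Bottom = (\<lambda>x. vedge x 0) ` {1..r - 2}"
| "side_edges r s Top = (\<lambda>x. vedge x (s - 2)) ` {1..r - 2}"

definition spokes :: "nat \<Rightarrow> nat \<Rightarrow> (nat \<times> nat) set set" where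
  "spokes r s = (\<Union>t. side_edges r s t)"

lemma spokes_eq_lines:
  "spokes r s = (\<Union>y\<in>{1..s - 2}. {hedge 0 y, hedge (r - 2) y})
    \<union> (\<Union>x\<in>{1..r - 2}. {vedge x 0, vedge x (s - 2)})"
  unfolding spokes_def by (auto simp: UNIV_side)

lemma side_edges_on_side:
  assumes "3 \<le> r" "3 \<le> s" "e \<in> side_edges r s t"
  shows "\<exists>p\<in>e. on_side r s t p"
  using assms by (cases t) (auto simp: hedge_def vedge_def)

lemma side_edges_disjoint:
  assumes "3 \<le> r" "3 \<le> s" "t \<noteq> t'"
  shows "side_edges r s t \<inter> side_edges r s t' = {}"
  using assms by (cases t; cases t') auto

lemma card_side_edges: "card (side_edges r s t) = (if t \<in> {Left, Right} then s - 2 else r - 2)"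
  by (cases t) (auto simp: card_image inj_on_def)

lemma card_spokes:
  assumes "3 \<le> r" "3 \<le> s"
  shows "card (spokes r s) = 2 * (r - 2) + 2 * (s - 2)"
proof -
  have "card (spokes r s) = (\<Sum>t\<in>UNIV. card (side_edges r s t))"
    unfolding spokes_def using side_edges_disjoint[OF assms]
    by (intro card_UN_disjoint) (auto simp: UNIV_side)
  then show ?thesis
    by (simp add: UNIV_side card_side_edges)
qed

lemma spokes_subset_graph_edges:
  assumes "3 \<le> r" "3 \<le> s"
  shows "spokes r s \<subseteq> graph_edges (grid r s) grid_adj"
proof
  fix e assume "e \<in> spokes r s"
  then obtain t where "e \<in> side_edges r s t"
    unfolding spokes_def by blast
  then show "e \<in> graph_edges (grid r s) grid_adj"
    unfolding graph_edges_grid using assms by (cases t) force+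
qed

lemma geodesic_side_edges_unique:
  assumes geo: "geodesic (grid r s) grid_adj xs"
    and "e \<in> side_edges r' s' t" "e' \<in> side_edges r' s' t" "e \<in> walk_edges xs" "e' \<in> walk_edges xs"
  shows "e = e'"
proof (cases t)
  case Left
  then show ?thesis using assms geodesic_hedge_unique[OF geo] by auto
next
  case Right
  then show ?thesis using assms geodesic_hedge_unique[OF geo] by auto
next
  case Bottom
  then show ?thesis using assms geodesic_vedge_unique[OF geo] by (auto simp del: vedge_eq_iff)
next
  case Top
  then show ?thesis using assms geodesic_vedge_unique[OF geo] by (auto simp del: vedge_eq_iff)
qed

lemma on_sides_not_between:
  assumes "3 \<le> r" "3 \<le> s" "on_side r s t1 p" "on_side r s t2 q" "on_side r s t3 w"
    and "t1 \<noteq> t2" "t2 \<noteq> t3" "t1 \<noteq> t3"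
  shows "manhattan p w \<noteq> manhattan p q + manhattan q w"
proof
  assume "manhattan p w = manhattan p q + manhattan q w"
  from manhattan_add_imp_between[OF this] assms show False
    by (cases t1; cases t2; cases t3) auto
qed

lemma geodesic_meets_at_most_two_sides:
  assumes "3 \<le> r" "3 \<le> s" and geo: "geodesic (grid r s) grid_adj xs"
    and "p1 \<in> set xs" "p2 \<in> set xs" "p3 \<in> set xs"
    and "on_side r s t1 p1" "on_side r s t2 p2" "on_side r s t3 p3"
    and "t1 \<noteq> t2" "t2 \<noteq> t3" "t1 \<noteq> t3"
  shows False
proof -
  have between: "manhattan (xs ! i) (xs ! k) = manhattan (xs ! i) (xs ! j) + manhattan (xs ! j) (xs ! k)"
    if "i \<le> j" "j \<le> k" "k < length xs" for i j k
    using geodesic_manhattan_nth[OF geo] that by simp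
  have key: False
    if "i \<le> j" "j \<le> k" "k < length xs" "on_side r s ta (xs ! i)" "on_side r s tb (xs ! j)"
      "on_side r s tc (xs ! k)" "ta \<noteq> tb" "tb \<noteq> tc" "ta \<noteq> tc" for i j k ta tb tc
    using on_sides_not_between[OF assms(1,2) that(4-9)] between[OF that(1-3)] by blast
  obtain i1 i2 i3 where i: "i1 < length xs" "i2 < length xs" "i3 < length xs"
      "xs ! i1 = p1" "xs ! i2 = p2" "xs ! i3 = p3"
    using assms(4-6) by (metis in_set_conv_nth)
  have "i1 \<le> i2 \<and> i2 \<le> i3 \<or> i1 \<le> i3 \<and> i3 \<le> i2 \<or> i2 \<le> i1 \<and> i1 \<le> i3
      \<or> i2 \<le> i3 \<and> i3 \<le> i1 \<or> i3 \<le> i1 \<and> i1 \<le> i2 \<or> i3 \<le> i2 \<and> i2 \<le> i1"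
    by linarith
  then show False
    using key[of i1 i2 i3 t1 t2 t3] key[of i1 i3 i2 t1 t3 t2] key[of i2 i1 i3 t2 t1 t3]
      key[of i2 i3 i1 t2 t3 t1] key[of i3 i1 i2 t3 t1 t2] key[of i3 i2 i1 t3 t2 t1] i assms(7-12)
    by auto
qed

lemma edge_gp_set_spokes:
  assumes "3 \<le> r" "3 \<le> s"
  shows "edge_gp_set (grid r s) grid_adj (spokes r s)"
  unfolding edge_gp_set_def
proof (intro conjI allI impI spokes_subset_graph_edges[OF assms])
  fix xs assume geo: "geodesic (grid r s) grid_adj xs"
  have vertex: "\<exists>p \<in> set xs. on_side r s t p" if "e \<in> side_edges r s t" "e \<in> walk_edges xs" for e t
    using side_edges_on_side[OF assms that(1)] walk_edges_subset_set[OF that(2)] by blast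
  show "card (spokes r s \<inter> walk_edges xs) < 3"
  proof (rule ccontr)
    assume "\<not> ?thesis"
    then obtain F where "F \<subseteq> spokes r s \<inter> walk_edges xs" "card F = 3"
      by (meson not_less obtain_subset_with_card_n)
    then obtain e1 e2 e3 where F: "F = {e1, e2, e3}" and e: "e1 \<noteq> e2" "e2 \<noteq> e3" "e1 \<noteq> e3"
      unfolding card_3_iff by blast
    then have w: "e1 \<in> walk_edges xs" "e2 \<in> walk_edges xs" "e3 \<in> walk_edges xs"
      and "e1 \<in> spokes r s" "e2 \<in> spokes r s" "e3 \<in> spokes r s"
      using \<open>F \<subseteq> _\<close> by auto
    then obtain t1 t2 t3 where t: "e1 \<in> side_edges r s t1" "e2 \<in> side_edges r s t2" "e3 \<in> side_edges r s t3"
      unfolding spokes_def by blast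
    \<comment> \<open>A geodesic contains at most one edge of each side, so the three edges lie on three
      different sides.\<close>
    have "t1 \<noteq> t2" "t2 \<noteq> t3" "t1 \<noteq> t3"
      using geodesic_side_edges_unique[OF geo t(1) _ w(1) w(2)] geodesic_side_edges_unique[OF geo t(2) _ w(2) w(3)]
        geodesic_side_edges_unique[OF geo t(1) _ w(1) w(3)] t e by auto
    moreover obtain p1 p2 p3 where "p1 \<in> set xs" "p2 \<in> set xs" "p3 \<in> set xs"
        "on_side r s t1 p1" "on_side r s t2 p2" "on_side r s t3 p3"
      using vertex[OF t(1) w(1)] vertex[OF t(2) w(2)] vertex[OF t(3) w(3)] by blast
    ultimately show False
      using geodesic_meets_at_most_two_sides[OF assms geo] by blast
  qed
qed

section \<open>The upper bound\<close>

lemma card_Int_Un_disjoint: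
  "finite S \<Longrightarrow> A \<inter> B = {} \<Longrightarrow> card (S \<inter> (A \<union> B)) = card (S \<inter> A) + card (S \<inter> B)"
  by (simp add: Int_Un_distrib card_Un_disjoint disjoint_iff)

lemma edge_gp_set_row_inequality:
  assumes gp: "edge_gp_set (grid r s) grid_adj S" and "2 \<le> r" "y < s"
  shows "2 * card (S \<inter> row_edges y 0 (r - 1))
    + card (S \<inter> col_edges 0 0 (s - 1)) + card (S \<inter> col_edges (r - 1) 0 (s - 1)) \<le> 4"
proof -
  have fin: "finite S"
    using gp by (rule edge_gp_set_grid_finite)
  let ?R = "row_edges y 0 (r - 1)"
  have count: "card (S \<inter> (col_edges 0 a b \<union> ?R \<union> col_edges (r - 1) c d))
      = card (S \<inter> col_edges 0 a b) + card (S \<inter> ?R) + card (S \<inter> col_edges (r - 1) c d)" for a b c d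
  proof -
    have "(col_edges 0 a b \<union> ?R) \<inter> col_edges (r - 1) c d = {}"
      using assms(2) by (simp add: Int_Un_distrib2 col_edges_disjoint)
    then show ?thesis
      using fin by (simp add: card_Int_Un_disjoint)
  qed
  \<comment> \<open>Two geodesics traverse row y, one from the bottom left to the top right corner and one
    from the top left to the bottom right corner; together they cover both border columns.\<close>
  have "\<exists>xs. geodesic (grid r s) grid_adj xs \<and>
      col_edges 0 0 y \<union> ?R \<union> col_edges (r - 1) y (s - 1) \<subseteq> walk_edges xs"
    using assms(2,3) by (intro geodesic_covering_col_row_col) auto
  then have 1: "card (S \<inter> col_edges 0 0 y) + card (S \<inter> ?R) + card (S \<inter> col_edges (r - 1) y (s - 1)) \<le> 2"
    using gp edge_gp_set_card_Int_le count by metis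
  have "\<exists>xs. geodesic (grid r s) grid_adj xs \<and>
      col_edges 0 (s - 1) y \<union> ?R \<union> col_edges (r - 1) y 0 \<subseteq> walk_edges xs"
    using assms(2,3) by (intro geodesic_covering_col_row_col) auto
  then have 2: "card (S \<inter> col_edges 0 y (s - 1)) + card (S \<inter> ?R) + card (S \<inter> col_edges (r - 1) 0 y) \<le> 2"
    using gp edge_gp_set_card_Int_le count col_edges_commute by metis
  have "card (S \<inter> col_edges x 0 (s - 1)) = card (S \<inter> col_edges x 0 y) + card (S \<inter> col_edges x y (s - 1))"
    for x
    using assms(3) fin col_edges_split[of 0 y "s - 1" x] col_edges_disjoint_adjacent[of 0 y "s - 1" x]
    by (simp add: card_Int_Un_disjoint)
  then show ?thesis
    using 1 2 by simp
qed

lemma edge_gp_set_col_inequality: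
  assumes gp: "edge_gp_set (grid r s) grid_adj S" and "2 \<le> s" "x < r"
  shows "2 * card (S \<inter> col_edges x 0 (s - 1))
    + card (S \<inter> row_edges 0 0 (r - 1)) + card (S \<inter> row_edges (s - 1) 0 (r - 1)) \<le> 4"
  using edge_gp_set_row_inequality[OF edge_gp_set_swap[OF gp] assms(2,3)]
  by (simp add: swap_edges_Int_eq)

lemma edge_gp_set_card_le_sum_lines:
  assumes "edge_gp_set (grid r s) grid_adj S"
  shows "card S
    \<le> (\<Sum>y<s. card (S \<inter> row_edges y 0 (r - 1))) + (\<Sum>x<r. card (S \<inter> col_edges x 0 (s - 1)))"
proof -
  have "card S \<le> card (\<Union>y<s. S \<inter> row_edges y 0 (r - 1)) + card (\<Union>x<r. S \<inter> col_edges x 0 (s - 1))"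
    using edge_gp_set_grid_eq_lines[OF assms] by (metis card_Un_le)
  also have "\<dots>
      \<le> (\<Sum>y<s. card (S \<inter> row_edges y 0 (r - 1))) + (\<Sum>x<r. card (S \<inter> col_edges x 0 (s - 1)))"
    by (intro add_mono card_UN_le) auto
  finally show ?thesis .
qed

lemma lessThan_eq_ends: "2 \<le> (n::nat) \<Longrightarrow> {..<n} = insert 0 (insert (n - 1) {1..n - 2})"
  by auto

lemma sum_lessThan_split_ends:
  assumes "2 \<le> (n::nat)"
  shows "(\<Sum>i<n. f i) = f 0 + f (n - 1) + (\<Sum>i\<in>{1..n - 2}. f i)"
proof -
  have "0 \<notin> insert (n - 1) {1..n - 2}" "n - 1 \<notin> {1..n - 2}"
    using assms by auto
  then show ?thesis
    using assms by (simp add: lessThan_eq_ends add.assoc)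
qed

lemma sum_eq_bound_imp_eq:
  fixes f :: "'a \<Rightarrow> nat"
  assumes "finite I" "\<And>i. i \<in> I \<Longrightarrow> f i \<le> c" "(\<Sum>i\<in>I. f i) = c * card I" "i \<in> I"
  shows "f i = c"
proof -
  have "(\<Sum>i\<in>I. c - f i) = 0"
    using assms(2,3) by (simp add: sum_subtractf_nat)
  then show ?thesis
    using assms(1,2,4) by (simp add: le_antisym)
qed

lemma edge_gp_set_card_bound:
  assumes gp: "edge_gp_set (grid r s) grid_adj S" and "5 \<le> r" "5 \<le> s"
  defines "a \<equiv> \<lambda>y. card (S \<inter> row_edges y 0 (r - 1))"
    and "b \<equiv> \<lambda>x. card (S \<inter> col_edges x 0 (s - 1))"
  shows "card S \<le> 2 * (r - 2) + 2 * (s - 2)"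
    and "card S = 2 * (r - 2) + 2 * (s - 2) \<Longrightarrow> a 0 = 0 \<and> a (s - 1) = 0 \<and> b 0 = 0 \<and> b (r - 1) = 0
           \<and> (\<forall>y\<in>{1..s - 2}. a y = 2) \<and> (\<forall>x\<in>{1..r - 2}. b x = 2)"
proof -
  define L where "L = b 0 + b (r - 1)"
  define T where "T = a 0 + a (s - 1)"
  define A where "A = (\<Sum>y\<in>{1..s - 2}. a y)"
  define B where "B = (\<Sum>x\<in>{1..r - 2}. b x)"
  have row: "2 * a y + L \<le> 4" if "y < s" for y
    using edge_gp_set_row_inequality[OF gp _ that] assms(2) unfolding a_def b_def L_def by simp
  have col: "2 * b x + T \<le> 4" if "x < r" for x
    using edge_gp_set_col_inequality[OF gp _ that] assms(3) unfolding a_def b_def T_def by simp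
  have "(\<Sum>y\<in>{1..s - 2}. 2 * a y + L) \<le> (\<Sum>y\<in>{1..s - 2}. 4)"
    using row by (intro sum_mono) auto
  then have rows: "2 * A + (s - 2) * L \<le> 4 * (s - 2)"
    unfolding A_def by (simp add: sum.distrib sum_distrib_left)
  have "(\<Sum>x\<in>{1..r - 2}. 2 * b x + T) \<le> (\<Sum>x\<in>{1..r - 2}. 4)"
    using col by (intro sum_mono) auto
  then have cols: "2 * B + (r - 2) * T \<le> 4 * (r - 2)"
    unfolding B_def by (simp add: sum.distrib sum_distrib_left)
  have total: "card S \<le> A + B + L + T"
    using edge_gp_set_card_le_sum_lines[OF gp] sum_lessThan_split_ends[of s a] sum_lessThan_split_ends[of r b] assms(2,3)
    unfolding A_def B_def L_def T_def a_def b_def by simp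
  \<comment> \<open>This is where r, s \<ge> 5 is needed: an edge of S in a border column lowers the bound
    on A by (s - 2)/2 \<ge> 3/2, more than the 1 it adds to the total.\<close>
  have border: "3 * L \<le> (s - 2) * L" "3 * T \<le> (r - 2) * T"
    using assms(2,3) by (intro mult_le_mono1, simp)+
  then show "card S \<le> 2 * (r - 2) + 2 * (s - 2)"
    using rows cols total border by linarith
  assume max: "card S = 2 * (r - 2) + 2 * (s - 2)"
  then have "L = 0" "T = 0" and A: "A = 2 * (s - 2)" and B: "B = 2 * (r - 2)"
    using rows cols total border by linarith+
  moreover have "a y = 2" if "y \<in> {1..s - 2}" for y
  proof (rule sum_eq_bound_imp_eq[of "{1..s - 2}" a 2 y])
    show "a i \<le> 2" if "i \<in> {1..s - 2}" for i
      using row[of i] that assms(3) by (simp add: le_diff_conv2)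
  qed (use that A A_def in auto)
  moreover have "b x = 2" if "x \<in> {1..r - 2}" for x
  proof (rule sum_eq_bound_imp_eq[of "{1..r - 2}" b 2 x])
    show "b i \<le> 2" if "i \<in> {1..r - 2}" for i
      using col[of i] that assms(2) by (simp add: le_diff_conv2)
  qed (use that B B_def in auto)
  ultimately show "a 0 = 0 \<and> a (s - 1) = 0 \<and> b 0 = 0 \<and> b (r - 1) = 0
      \<and> (\<forall>y\<in>{1..s - 2}. a y = 2) \<and> (\<forall>x\<in>{1..r - 2}. b x = 2)"
    unfolding L_def T_def by simp
qed

section \<open>Uniqueness\<close>

lemma edge_gp_set_row_col_conflict:
  assumes gp: "edge_gp_set (grid r s) grid_adj S"
    and "a < r" "x < r" "y < s" "Suc c < s"
    and S: "hedge k y \<in> S" "hedge k' y \<in> S" "vedge x c \<in> S" and "k \<noteq> k'"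
    and row: "hedge k y \<in> row_edges y a x" "hedge k' y \<in> row_edges y a x"
  shows False
proof -
  \<comment> \<open>The geodesic runs along row y from column a to column x and then along column x
    up or down to the far end of the edge vedge x c.\<close>
  define c' where "c' = (if y \<le> c then Suc c else c)"
  let ?F = "row_edges y a x \<union> col_edges x y c'"
  have "\<exists>xs. geodesic (grid r s) grid_adj xs \<and>
      col_edges a y y \<union> row_edges y a x \<union> col_edges x y c' \<subseteq> walk_edges xs"
    using assms(2-5) by (intro geodesic_covering_col_row_col) (auto simp: c'_def)
  then obtain xs where "geodesic (grid r s) grid_adj xs" "?F \<subseteq> walk_edges xs"
    by auto
  then have "card (S \<inter> ?F) \<le> 2"
    using gp edge_gp_set_card_Int_le by blast
  moreover have "{hedge k y, hedge k' y, vedge x c} \<subseteq> S \<inter> ?F"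
    using S row by (auto simp: c'_def)
  then have "card {hedge k y, hedge k' y, vedge x c} \<le> card (S \<inter> ?F)"
    using edge_gp_set_grid_finite[OF gp] by (intro card_mono) auto
  ultimately show False
    using \<open>k \<noteq> k'\<close> by simp
qed

lemma edge_gp_set_row_pair_at_ends:
  assumes gp: "edge_gp_set (grid r s) grid_adj S" and "y < s"
    and S: "hedge k y \<in> S" "hedge k' y \<in> S" and "k < k'" "k' < r - 1"
    and cols: "\<And>x. x \<in> {1..r - 2} \<Longrightarrow> S \<inter> col_edges x 0 (s - 1) \<noteq> {}"
  shows "k = 0 \<and> k' = r - 2"
proof -
  have col_edge: "\<exists>c. Suc c < s \<and> vedge x c \<in> S" if x: "x \<in> {1..r - 2}" for x
  proof -
    obtain e where "e \<in> S" "e \<in> col_edges x 0 (s - 1)"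
      using cols[OF x] by blast
    then obtain c where "vedge x c \<in> S" "c < s - 1"
      unfolding mem_col_edges by auto
    then show ?thesis
      by (intro exI[of _ c]) simp
  qed
  \<comment> \<open>Otherwise column k' + 1 is an inner column right of both edges, and it carries an edge of S.\<close>
  have "k' = r - 2"
  proof (rule ccontr)
    assume "k' \<noteq> r - 2"
    then have "Suc k' \<in> {1..r - 2}"
      using assms(6) by auto
    then obtain c where "Suc c < s" "vedge (Suc k') c \<in> S"
      using col_edge by blast
    moreover have "Suc k' < r"
      using assms(6) by simp
    ultimately show False
      using edge_gp_set_row_col_conflict[OF gp, of 0 "Suc k'" y c k k'] assms(2,5) S by simp
  qed
  moreover have "k = 0"
  proof (rule ccontr)
    assume "k \<noteq> 0"
    then have "k \<in> {1..r - 2}"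
      using assms(5,6) by auto
    then obtain c where "Suc c < s" "vedge k c \<in> S"
      using col_edge by blast
    moreover have "k < r"
      using assms(5,6) by simp
    ultimately show False
      using edge_gp_set_row_col_conflict[OF gp, of "r - 1" k y c k k'] assms(2,5,6) S by simp
  qed
  ultimately show ?thesis
    by simp
qed

lemma edge_gp_set_card_max_rows:
  assumes gp: "edge_gp_set (grid r s) grid_adj S" and "5 \<le> r" "5 \<le> s"
    and max: "card S = 2 * (r - 2) + 2 * (s - 2)"
  shows "S \<inter> row_edges 0 0 (r - 1) = {}" "S \<inter> row_edges (s - 1) 0 (r - 1) = {}"
    and "y \<in> {1..s - 2} \<Longrightarrow> S \<inter> row_edges y 0 (r - 1) = {hedge 0 y, hedge (r - 2) y}"
proof -
  note counts = edge_gp_set_card_bound(2)[OF gp assms(2,3) max]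
  show "S \<inter> row_edges 0 0 (r - 1) = {}" "S \<inter> row_edges (s - 1) 0 (r - 1) = {}"
    using counts edge_gp_set_grid_finite[OF gp] by simp_all
  assume y: "y \<in> {1..s - 2}"
  have "card (S \<inter> row_edges y 0 (r - 1)) = 2"
    using counts y by blast
  then obtain e1 e2 where e: "S \<inter> row_edges y 0 (r - 1) = {e1, e2}" "e1 \<noteq> e2"
    unfolding card_2_iff by blast
  then have "e1 \<in> row_edges y 0 (r - 1)" "e2 \<in> row_edges y 0 (r - 1)"
    by blast+
  then obtain k1 k2 where k: "e1 = hedge k1 y" "e2 = hedge k2 y" "k1 < r - 1" "k2 < r - 1"
    unfolding mem_row_edges by auto
  have S: "hedge k1 y \<in> S" "hedge k2 y \<in> S"
    using e(1) k(1,2) by blast+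
  have cols: "S \<inter> col_edges x 0 (s - 1) \<noteq> {}" if "x \<in> {1..r - 2}" for x
  proof -
    have "card (S \<inter> col_edges x 0 (s - 1)) = 2"
      using counts that by blast
    then show ?thesis
      by auto
  qed
  have "y < s"
    using y assms(3) by auto
  have "k1 < k2 \<or> k2 < k1"
    using e(2) k(1,2) by auto
  then show "S \<inter> row_edges y 0 (r - 1) = {hedge 0 y, hedge (r - 2) y}"
  proof
    assume "k1 < k2"
    then have "k1 = 0 \<and> k2 = r - 2"
      using edge_gp_set_row_pair_at_ends[OF gp \<open>y < s\<close> S] k(4) cols by blast
    then show ?thesis
      using e(1) k(1,2) by simp
  next
    assume "k2 < k1"
    then have "k2 = 0 \<and> k1 = r - 2"
      using edge_gp_set_row_pair_at_ends[OF gp \<open>y < s\<close> S(2,1)] k(3) cols by blast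
    then show ?thesis
      using e(1) k(1,2) by (simp add: insert_commute)
  qed
qed

lemma edge_gp_set_card_max_cols:
  assumes gp: "edge_gp_set (grid r s) grid_adj S" and "5 \<le> r" "5 \<le> s"
    and max: "card S = 2 * (r - 2) + 2 * (s - 2)"
  shows "S \<inter> col_edges 0 0 (s - 1) = {}" "S \<inter> col_edges (r - 1) 0 (s - 1) = {}"
    and "x \<in> {1..r - 2} \<Longrightarrow> S \<inter> col_edges x 0 (s - 1) = {vedge x 0, vedge x (s - 2)}"
proof -
  have "card (swap_edges S) = 2 * (s - 2) + 2 * (r - 2)"
    using max by simp
  note rows = edge_gp_set_card_max_rows[OF edge_gp_set_swap[OF gp] assms(3,2) this]
  have col_eq: "S \<inter> col_edges x a b = swap_edges (swap_edges S \<inter> row_edges x a b)" for x a b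
    by (simp add: swap_edges_Int)
  show "S \<inter> col_edges 0 0 (s - 1) = {}" "S \<inter> col_edges (r - 1) 0 (s - 1) = {}"
    unfolding col_eq using rows(1,2) by simp_all
  show "S \<inter> col_edges x 0 (s - 1) = {vedge x 0, vedge x (s - 2)}" if "x \<in> {1..r - 2}"
    unfolding col_eq using rows(3)[OF that] by (simp add: swap_edges_def)
qed

lemma edge_gp_set_card_max_eq_spokes:
  assumes gp: "edge_gp_set (grid r s) grid_adj S" and "5 \<le> r" "5 \<le> s"
    and max: "card S = 2 * (r - 2) + 2 * (s - 2)"
  shows "S = spokes r s"
proof -
  note rows = edge_gp_set_card_max_rows[OF assms] and cols = edge_gp_set_card_max_cols[OF assms]
  have "S = (\<Union>y<s. S \<inter> row_edges y 0 (r - 1)) \<union> (\<Union>x<r. S \<inter> col_edges x 0 (s - 1))"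
    using gp by (rule edge_gp_set_grid_eq_lines)
  also have "\<dots> = (\<Union>y\<in>{1..s - 2}. S \<inter> row_edges y 0 (r - 1))
      \<union> (\<Union>x\<in>{1..r - 2}. S \<inter> col_edges x 0 (s - 1))"
    using rows(1,2) cols(1,2) assms(2,3) by (simp add: lessThan_eq_ends)
  also have "\<dots> = (\<Union>y\<in>{1..s - 2}. {hedge 0 y, hedge (r - 2) y})
      \<union> (\<Union>x\<in>{1..r - 2}. {vedge x 0, vedge x (s - 2)})"
    by (simp only: SUP_cong[OF refl rows(3)] SUP_cong[OF refl cols(3)])
  also have "\<dots> = spokes r s"
    by (rule spokes_eq_lines[symmetric])
  finally show ?thesis .
qed

lemma gpe_grid:
  assumes "5 \<le> r" "5 \<le> s"
  shows "gpe (grid r s) grid_adj = 2 * (r - 2) + 2 * (s - 2)"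
  unfolding gpe_def
proof (rule Max_eqI)
  have "{card S |S. edge_gp_set (grid r s) grid_adj S} \<subseteq> card ` Pow (graph_edges (grid r s) grid_adj)"
    unfolding edge_gp_set_def by auto
  then show "finite {card S |S. edge_gp_set (grid r s) grid_adj S}"
    by (rule finite_subset) (simp add: finite_graph_edges_grid)
  show "n \<le> 2 * (r - 2) + 2 * (s - 2)" if n: "n \<in> {card S |S. edge_gp_set (grid r s) grid_adj S}" for n
  proof -
    obtain S where "n = card S" "edge_gp_set (grid r s) grid_adj S"
      using n by blast
    then show ?thesis
      using edge_gp_set_card_bound(1)[OF _ assms] by simp
  qed
  have "edge_gp_set (grid r s) grid_adj (spokes r s)" "card (spokes r s) = 2 * (r - 2) + 2 * (s - 2)"
    using edge_gp_set_spokes card_spokes assms by simp_all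
  then show "2 * (r - 2) + 2 * (s - 2) \<in> {card S |S. edge_gp_set (grid r s) grid_adj S}"
    by (metis (mono_tags, lifting) mem_Collect_eq)
qed

theorem theorem4p2:
  fixes r s :: nat
  assumes "5 \<le> r" and "5 \<le> s"
  shows "\<exists>!S. gpe_set (cart_V (path_V r) (path_V s)) (cart_adj path_adj path_adj) S"
proof (rule ex1I[of _ "spokes r s"])
  have "edge_gp_set (grid r s) grid_adj (spokes r s)" "card (spokes r s) = 2 * (r - 2) + 2 * (s - 2)"
    using edge_gp_set_spokes card_spokes assms by simp_all
  then show "gpe_set (grid r s) grid_adj (spokes r s)"
    unfolding gpe_set_def gpe_grid[OF assms] by simp
next
  fix S assume "gpe_set (grid r s) grid_adj S"
  then show "S = spokes r s"
    unfolding gpe_set_def gpe_grid[OF assms] using edge_gp_set_card_max_eq_spokes assms by blast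
qed

end
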